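(* Let $k\subseteq K$ be fields with $\operatorname{char}k=p>0$, let $m$ be a natural number, let $X$ be a power series indeterminate over $K$, and let $D$ be an integral domain with $k+X^mK[[X]]\subseteq D\subseteq K[[X]]$. Let $M=D\cap XK[[X]]$, and regard $D/M$ as a subfield of $K$ via the map $K[[X]]\to K$, $f\mapsto f(0)$. (i) If $k\subseteq K$ is a root extension, then $D$ is a quasilocal AV-domain whose integral closure is $K[[X]]$. (ii) If $k\subseteq K$ is a bounded root extension, then $D$ is a quasilocal API-domain whose integral closure is $K[[X]]$. (iii) Assuming $k\subseteq K$ is a root extension, $(D,M)$ is an API-domain if and only if $D/M\subseteq K$ is a bounded root extension. (iv) If moreover $[K:k]<\infty$, then $D$ is a complete local AV-domain in case (i), and a complete local API-domain in case (ii).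
   Context: An extension of commutative rings $R\subseteq S$ is a root extension if for each $s\in S$ there is a natural number $n$ with $s^n\in R$, and a bounded root extension if there is a single natural number $n$ with $s^n\in R$ for all $s\in S$. An integral domain $D$ is an AV-domain if for all nonzero $a,b\in D$ there is a natural number $n$ with $a^n\mid b^n$ or $b^n\mid a^n$ in $D$. $D$ is an API-domain if for every nonempty subset $\{d_\alpha\}$ of $D\setminus\{0\}$ there is $n$ with the ideal $(\{d_\alpha^n\})$ principal. Quasilocal means having a unique maximal ideal; local means Noetherian and quasilocal; complete local means local and complete in the $M$-adic topology. The integral closure is taken in the quotient field. *)

theory Defs
  imports "HOL-Computational_Algebra.Formal_Laurent_Series"
begin

definition subring :: "'a::comm_ring_1 set \<Rightarrow> bool" where
  "subring D \<longleftrightarrow> 0 \<in> D \<and> 1 \<in> D \<and> (\<forall>x\<in>D. \<forall>y\<in>D. x + y \<in> D \<and> x - y \<in> D \<and> x * y \<in> D)"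

definition subfield :: "'a::field set \<Rightarrow> bool" where
  "subfield k \<longleftrightarrow> subring k \<and> (\<forall>x\<in>k. x \<noteq> 0 \<longrightarrow> inverse x \<in> k)"

definition ideal_in :: "'a::comm_ring_1 set \<Rightarrow> 'a set \<Rightarrow> bool" where
  "ideal_in D I \<longleftrightarrow> I \<subseteq> D \<and> 0 \<in> I \<and> (\<forall>x\<in>I. \<forall>y\<in>I. x + y \<in> I) \<and> (\<forall>r\<in>D. \<forall>x\<in>I. r * x \<in> I)"

definition maximal_ideal_in :: "'a::comm_ring_1 set \<Rightarrow> 'a set \<Rightarrow> bool" where
  "maximal_ideal_in D M \<longleftrightarrow> ideal_in D M \<and> M \<noteq> D \<and>
     (\<forall>J. ideal_in D J \<and> M \<subseteq> J \<longrightarrow> J = M \<or> J = D)"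

definition quasilocal :: "'a::comm_ring_1 set \<Rightarrow> bool" where
  "quasilocal D \<longleftrightarrow> (\<exists>!M. maximal_ideal_in D M)"

definition gen_ideal :: "'a::comm_ring_1 set \<Rightarrow> 'a set \<Rightarrow> 'a set" where
  "gen_ideal D A = \<Inter>{I. ideal_in D I \<and> A \<subseteq> I}"

definition principal_in :: "'a::comm_ring_1 set \<Rightarrow> 'a set \<Rightarrow> bool" where
  "principal_in D I \<longleftrightarrow> (\<exists>g\<in>D. I = {g * c | c. c \<in> D})"

definition dvd_in :: "'a::comm_ring_1 set \<Rightarrow> 'a \<Rightarrow> 'a \<Rightarrow> bool" where
  "dvd_in D a b \<longleftrightarrow> (\<exists>c\<in>D. b = a * c)"

definition root_extension :: "'a::comm_ring_1 set \<Rightarrow> 'a set \<Rightarrow> bool" where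
  "root_extension R S \<longleftrightarrow> R \<subseteq> S \<and> (\<forall>s\<in>S. \<exists>n>0. s ^ n \<in> R)"

definition bounded_root_extension :: "'a::comm_ring_1 set \<Rightarrow> 'a set \<Rightarrow> bool" where
  "bounded_root_extension R S \<longleftrightarrow> R \<subseteq> S \<and> (\<exists>n>0. \<forall>s\<in>S. s ^ n \<in> R)"

definition AV_domain :: "'a::idom set \<Rightarrow> bool" where
  "AV_domain D \<longleftrightarrow> subring D \<and>
     (\<forall>a\<in>D - {0}. \<forall>b\<in>D - {0}. \<exists>n>0. dvd_in D (a ^ n) (b ^ n) \<or> dvd_in D (b ^ n) (a ^ n))"

definition API_domain :: "'a::idom set \<Rightarrow> bool" where
  "API_domain D \<longleftrightarrow> subring D \<and>
     (\<forall>S. S \<noteq> {} \<and> S \<subseteq> D - {0} \<longrightarrow> (\<exists>n>0. principal_in D (gen_ideal D ((\<lambda>d. d ^ n) ` S))))"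

definition noetherian_in :: "'a::comm_ring_1 set \<Rightarrow> bool" where
  "noetherian_in D \<longleftrightarrow> (\<forall>I. ideal_in D I \<longrightarrow> (\<exists>A. finite A \<and> A \<subseteq> I \<and> I = gen_ideal D A))"

fun ideal_pow :: "'a::comm_ring_1 set \<Rightarrow> 'a set \<Rightarrow> nat \<Rightarrow> 'a set" where
  "ideal_pow D M 0 = D"
| "ideal_pow D M (Suc n) = gen_ideal D {x * y | x y. x \<in> ideal_pow D M n \<and> y \<in> M}"

definition adic_complete :: "'a::comm_ring_1 set \<Rightarrow> 'a set \<Rightarrow> bool" where
  "adic_complete D M \<longleftrightarrow>
     (\<Inter>n. ideal_pow D M n) = {0} \<and>
     (\<forall>f::nat \<Rightarrow> 'a. (\<forall>i. f i \<in> D) \<and> (\<forall>n. \<exists>N. \<forall>i\<ge>N. \<forall>j\<ge>N. f i - f j \<in> ideal_pow D M n) \<longrightarrow>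
        (\<exists>L\<in>D. \<forall>n. \<exists>N. \<forall>i\<ge>N. f i - L \<in> ideal_pow D M n))"

definition complete_local :: "'a::comm_ring_1 set \<Rightarrow> bool" where
  "complete_local D \<longleftrightarrow> noetherian_in D \<and> quasilocal D \<and>
     (\<forall>M. maximal_ideal_in D M \<longrightarrow> adic_complete D M)"

text \<open>Quotient field of a subring D of K[[X]], realised inside K((X)).\<close>
definition quot_field_fls :: "'a::field fps set \<Rightarrow> 'a fls set" where
  "quot_field_fls D = {fps_to_fls a / fps_to_fls b | a b. a \<in> D \<and> b \<in> D \<and> b \<noteq> 0}"

definition integral_over_fls :: "'a::field fps set \<Rightarrow> 'a fls \<Rightarrow> bool" where
  "integral_over_fls D x \<longleftrightarrow> (\<exists>n c. (\<forall>i<n. c i \<in> D) \<and>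
      x ^ n + (\<Sum>i<n. fps_to_fls (c i) * x ^ i) = 0)"

definition integral_closure_fls :: "'a::field fps set \<Rightarrow> 'a fls set" where
  "integral_closure_fls D = {x \<in> quot_field_fls D. integral_over_fls D x}"

definition finite_degree :: "'a::field set \<Rightarrow> bool" where
  "finite_degree k \<longleftrightarrow> (\<exists>B. finite B \<and> (\<forall>x::'a. \<exists>c. (\<forall>b\<in>B. c b \<in> k) \<and> x = (\<Sum>b\<in>B. c b * b)))"

end

theory Submission
  imports Defs
begin

unbundle fps_syntax

text \<open>Let \<open>q = p\<^sup>m\<close>. Frobenius is additive and \<open>q \<ge> m\<close>, so every \<open>g = g(0) + X h\<close> with
  \<open>g(0) \<in> k\<close> satisfies \<open>g\<^sup>q = g(0)\<^sup>q + X\<^sup>q h\<^sup>q \<in> k + X\<^sup>m K[[X]] \<subseteq> D\<close>.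
  Hence \<open>K[[X]]\<close> is a root extension of \<open>D\<close> if \<open>K\<close> is one of \<open>k\<close>, and a bounded one if
  \<open>K\<close> is a bounded root extension of \<open>k\<close>, or even of the residue field \<open>D/M\<close>.
  The rest is read off the order function of \<open>K[[X]]\<close>: elements of \<open>D\<close> with nonzero
  constant term are units of \<open>D\<close>, so \<open>M\<close> is the only maximal ideal; divisibility in \<open>K[[X]]\<close>
  is decided by orders, which gives the AV and API properties; and \<open>K[[X]]\<close> is integrally closed.
  Conversely, if \<open>D\<close> is API, a generator of the ideal generated by the \<open>(a X\<^sup>m)\<^sup>n\<close> is
  \<open>X\<^sup>m\<^sup>n\<close> times a unit of \<open>D\<close>, which forces every \<open>a\<^sup>n\<close> into \<open>D/M\<close>.
  If \<open>[K:k] < \<infinity>\<close>, an ideal containing an element of order \<open>r\<close> contains all series of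
  order \<open>\<ge> r + m\<close>, so it is generated by \<open>X\<^sup>r\<^sup>+\<^sup>m\<close> and finitely many lifts of its truncations,
  which lie in a finite-dimensional \<open>k\<close>-space; and since the \<open>M\<close>-adic and \<open>X\<close>-adic
  filtrations of \<open>D\<close> are cofinal in each other, \<open>D\<close> inherits completeness from \<open>K[[X]]\<close>.\<close>

lemma subring_zero: "subring D \<Longrightarrow> 0 \<in> D"
  and subring_one: "subring D \<Longrightarrow> 1 \<in> D"
  and subring_add: "subring D \<Longrightarrow> a \<in> D \<Longrightarrow> b \<in> D \<Longrightarrow> a + b \<in> D"
  and subring_diff: "subring D \<Longrightarrow> a \<in> D \<Longrightarrow> b \<in> D \<Longrightarrow> a - b \<in> D"
  and subring_mult: "subring D \<Longrightarrow> a \<in> D \<Longrightarrow> b \<in> D \<Longrightarrow> a * b \<in> D"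
  unfolding subring_def by auto

lemma subring_uminus: "subring D \<Longrightarrow> a \<in> D \<Longrightarrow> - a \<in> D"
  using subring_diff[of D 0 a] subring_zero[of D] by simp

lemma subring_power: "subring D \<Longrightarrow> a \<in> D \<Longrightarrow> a ^ n \<in> D"
  by (induction n) (auto intro: subring_one subring_mult)

lemma subfield_subring: "subfield k \<Longrightarrow> subring k"
  and subfield_inverse: "subfield k \<Longrightarrow> a \<in> k \<Longrightarrow> inverse a \<in> k"
  unfolding subfield_def by (auto simp: subring_zero)

lemma ideal_in_self: "subring D \<Longrightarrow> ideal_in D D"
  unfolding ideal_in_def by (auto intro: subring_zero subring_add subring_mult)

lemma ideal_in_sum: "ideal_in D I \<Longrightarrow> (\<And>i. i \<in> A \<Longrightarrow> f i \<in> I) \<Longrightarrow> sum f A \<in> I"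
  unfolding ideal_in_def by (induction A rule: infinite_finite_induct) auto

lemma gen_ideal_superset: "A \<subseteq> gen_ideal D A"
  and gen_ideal_least: "ideal_in D I \<Longrightarrow> A \<subseteq> I \<Longrightarrow> gen_ideal D A \<subseteq> I"
  unfolding gen_ideal_def by blast+

lemma gen_ideal_ideal:
  assumes "subring D" "A \<subseteq> D"
  shows "ideal_in D (gen_ideal D A)"
  using gen_ideal_least[OF ideal_in_self[OF assms(1)] assms(2)]
  unfolding ideal_in_def gen_ideal_def by blast

lemma principal_in_gen_ideal:
  assumes D: "subring D" and "A \<subseteq> D" and g: "g \<in> A" and dvd: "\<And>a. a \<in> A \<Longrightarrow> dvd_in D g a"
  shows "principal_in D (gen_ideal D A)"
proof -
  let ?gD = "{g * c | c. c \<in> D}"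
  have "g \<in> D" using assms by blast
  have "ideal_in D ?gD"
    unfolding ideal_in_def
  proof (intro conjI ballI)
    show "?gD \<subseteq> D" using D \<open>g \<in> D\<close> by (auto intro: subring_mult)
    show "0 \<in> ?gD" using subring_zero[OF D] by (auto intro!: exI[of _ 0])
    show "x + y \<in> ?gD" if "x \<in> ?gD" "y \<in> ?gD" for x y
      using that subring_add[OF D] by (auto simp flip: distrib_left)
    show "r * x \<in> ?gD" if "r \<in> D" "x \<in> ?gD" for r x
      using that subring_mult[OF D] by (auto simp: mult.left_commute)
  qed
  then have "gen_ideal D A \<subseteq> ?gD"
    using dvd by (intro gen_ideal_least) (auto simp: dvd_in_def)
  moreover have "?gD \<subseteq> gen_ideal D A"
    using gen_ideal_ideal[OF D \<open>A \<subseteq> D\<close>] gen_ideal_superset[of A D] g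
    unfolding ideal_in_def by (auto simp: mult.commute)
  ultimately show ?thesis
    using \<open>g \<in> D\<close> unfolding principal_in_def by blast
qed

lemma maximal_ideal_in_iff_largest_proper:
  assumes "ideal_in D M" "M \<noteq> D" and "\<And>J. ideal_in D J \<Longrightarrow> J \<noteq> D \<Longrightarrow> J \<subseteq> M"
  shows "maximal_ideal_in D J \<longleftrightarrow> J = M"
  using assms unfolding maximal_ideal_in_def by (metis subset_antisym)

lemma ideal_pow_ideal:
  assumes "subring D" "M \<subseteq> D"
  shows "ideal_in D (ideal_pow D M n)"
proof (induction n)
  case 0
  then show ?case using ideal_in_self[OF assms(1)] by simp
next
  case (Suc n)
  then have "{x * y | x y. x \<in> ideal_pow D M n \<and> y \<in> M} \<subseteq> D"
    using assms unfolding ideal_in_def by (auto intro: subring_mult)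
  then show ?case by (simp add: gen_ideal_ideal assms(1))
qed

section \<open>Finitely generated subspaces\<close>

text \<open>Linear algebra over a subring \<open>F\<close> of the ambient ring, with \<open>F\<close> acting by multiplication.\<close>

definition span_over :: "'b::comm_ring_1 set \<Rightarrow> ('i \<Rightarrow> 'b) \<Rightarrow> 'i set \<Rightarrow> 'b set" where
  "span_over F g I = {(\<Sum>i\<in>I. c i * g i) | c. \<forall>i\<in>I. c i \<in> F}"

definition subspace_over :: "'b::comm_ring_1 set \<Rightarrow> 'b set \<Rightarrow> bool" where
  "subspace_over F V \<longleftrightarrow> 0 \<in> V \<and> (\<forall>x\<in>V. \<forall>y\<in>V. x + y \<in> V) \<and> (\<forall>c\<in>F. \<forall>x\<in>V. c * x \<in> V)"

lemma span_over_empty: "span_over F g {} = {0}"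
  unfolding span_over_def by auto

lemma span_over_insert:
  assumes "finite I" "i \<notin> I"
  shows "v \<in> span_over F g (insert i I) \<longleftrightarrow> (\<exists>a\<in>F. \<exists>w\<in>span_over F g I. v = a * g i + w)"
proof
  assume "v \<in> span_over F g (insert i I)"
  then obtain c where c: "\<forall>j\<in>insert i I. c j \<in> F" "v = (\<Sum>j\<in>insert i I. c j * g j)"
    unfolding span_over_def by blast
  then have "v = c i * g i + (\<Sum>j\<in>I. c j * g j)" using assms by simp
  moreover have "(\<Sum>j\<in>I. c j * g j) \<in> span_over F g I"
    unfolding span_over_def using c(1) by blast
  ultimately show "\<exists>a\<in>F. \<exists>w\<in>span_over F g I. v = a * g i + w" using c(1) by blast
next
  assume "\<exists>a\<in>F. \<exists>w\<in>span_over F g I. v = a * g i + w"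
  then obtain a c where a: "a \<in> F" and c: "\<forall>j\<in>I. c j \<in> F"
    and v: "v = a * g i + (\<Sum>j\<in>I. c j * g j)"
    unfolding span_over_def by blast
  have "(\<Sum>j\<in>I. c j * g j) = (\<Sum>j\<in>I. (c(i := a)) j * g j)"
    using assms(2) by (intro sum.cong) auto
  then have "v = (\<Sum>j\<in>insert i I. (c(i := a)) j * g j)"
    using v assms by simp
  moreover have "\<forall>j\<in>insert i I. (c(i := a)) j \<in> F" using a c by auto
  ultimately show "v \<in> span_over F g (insert i I)"
    unfolding span_over_def by blast
qed

lemma subspace_span_over:
  assumes F: "subring F"
  shows "subspace_over F (span_over F g I)"
  unfolding subspace_over_def
proof (intro conjI ballI)
  show "0 \<in> span_over F g I"
    unfolding span_over_def using subring_zero[OF F] by (auto intro!: exI[of _ "\<lambda>_. 0"])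
next
  fix x y assume "x \<in> span_over F g I" "y \<in> span_over F g I"
  then obtain c d where "\<forall>i\<in>I. c i \<in> F" "x = (\<Sum>i\<in>I. c i * g i)"
    and "\<forall>i\<in>I. d i \<in> F" "y = (\<Sum>i\<in>I. d i * g i)"
    unfolding span_over_def by blast
  then show "x + y \<in> span_over F g I"
    unfolding span_over_def using subring_add[OF F]
    by (auto intro!: exI[of _ "\<lambda>i. c i + d i"] simp: sum.distrib distrib_right)
next
  fix a x assume "a \<in> F" "x \<in> span_over F g I"
  then obtain c where "\<forall>i\<in>I. c i \<in> F" "x = (\<Sum>i\<in>I. c i * g i)"
    unfolding span_over_def by blast
  then show "a * x \<in> span_over F g I"
    unfolding span_over_def using subring_mult[OF F] \<open>a \<in> F\<close>
    by (auto intro!: exI[of _ "\<lambda>i. a * c i"] simp: sum_distrib_left mult.assoc)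
qed

lemma subspace_over_eliminate:
  assumes F: "subring F" and inv: "\<And>c. c \<in> F \<Longrightarrow> c \<noteq> 0 \<Longrightarrow> \<exists>c'\<in>F. c' * c = 1"
    and I: "finite I" "i \<notin> I" and V: "subspace_over F V" "V \<subseteq> span_over F g (insert i I)"
    and v0: "v0 \<in> V" "v0 \<notin> span_over F g I" and v: "v \<in> V"
  shows "\<exists>t\<in>F. v - t * v0 \<in> V \<inter> span_over F g I"
proof -
  obtain a0 w0 where a0: "a0 \<in> F" and w0: "w0 \<in> span_over F g I" and v0_eq: "v0 = a0 * g i + w0"
    using V(2) v0(1) span_over_insert[OF I] by blast
  have "a0 \<noteq> 0" using v0(2) w0 v0_eq by auto
  then obtain a' where a': "a' \<in> F" "a' * a0 = 1" using inv a0 by blast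
  obtain a w where a: "a \<in> F" and w: "w \<in> span_over F g I" and v_eq: "v = a * g i + w"
    using V(2) v span_over_insert[OF I] by blast
  define t where "t = a * a'"
  have t: "t \<in> F" "- t \<in> F"
    unfolding t_def using a a' F by (auto intro: subring_mult subring_uminus)
  have "v - t * v0 = w + (- t) * w0"
  proof -
    have "a = t * a0" unfolding t_def using a'(2) by (metis mult.assoc mult_1_right)
    then show ?thesis using v_eq v0_eq by (simp add: algebra_simps)
  qed
  also have "\<dots> \<in> span_over F g I"
    using subspace_span_over[OF F, of g I] w w0 t unfolding subspace_over_def by blast
  finally have "v - t * v0 \<in> span_over F g I" .
  moreover have "v + (- t) * v0 \<in> V" using V(1) v v0(1) t unfolding subspace_over_def by blast
  ultimately show ?thesis using t by auto
qed

lemma finitely_generated_subspace_over: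
  assumes F: "subring F" and inv: "\<And>c. c \<in> F \<Longrightarrow> c \<noteq> 0 \<Longrightarrow> \<exists>c'\<in>F. c' * c = 1"
    and "finite I"
  shows "subspace_over F V \<Longrightarrow> V \<subseteq> span_over F g I \<Longrightarrow>
    \<exists>A. finite A \<and> A \<subseteq> V \<and> V \<subseteq> span_over F id A"
  using \<open>finite I\<close>
proof (induction I arbitrary: V rule: finite_induct)
  case empty
  then show ?case by (intro exI[of _ "{}"]) (simp add: span_over_empty)
next
  case (insert i I)
  have "subspace_over F (V \<inter> span_over F g I)"
    using insert.prems(1) subspace_span_over[OF F, of g I] unfolding subspace_over_def by blast
  then obtain A where A: "finite A" "A \<subseteq> V \<inter> span_over F g I"
    "V \<inter> span_over F g I \<subseteq> span_over F id A"
    using insert.IH[of "V \<inter> span_over F g I"] by blast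
  show ?case
  proof (cases "V \<subseteq> span_over F g I")
    case True
    then show ?thesis using A by blast
  next
    case False
    then obtain v0 where v0: "v0 \<in> V" "v0 \<notin> span_over F g I" by blast
    have "v0 \<notin> A" using A(2) v0(2) by blast
    have "V \<subseteq> span_over F id (insert v0 A)"
    proof
      fix v assume "v \<in> V"
      then obtain t where "t \<in> F" "v - t * v0 \<in> span_over F id A"
        using subspace_over_eliminate[OF F inv insert.hyps(1,2) insert.prems v0] A(3) by blast
      then show "v \<in> span_over F id (insert v0 A)"
        using span_over_insert[OF A(1) \<open>v0 \<notin> A\<close>] by (metis add.commute diff_add_cancel id_apply)
    qed
    moreover have "finite (insert v0 A)" "insert v0 A \<subseteq> V" using A(1,2) v0(1) by auto
    ultimately show ?thesis by blast
  qed
qed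

lemma fps_X_power_dvd_iff: "fps_X ^ n dvd (f :: 'a::comm_ring_1 fps) \<longleftrightarrow> (\<forall>j<n. f $ j = 0)"
proof
  assume "fps_X ^ n dvd f"
  then obtain g where "f = fps_X ^ n * g" by (elim dvdE)
  then show "\<forall>j<n. f $ j = 0" by (simp add: fps_X_power_mult_nth)
next
  assume "\<forall>j<n. f $ j = 0"
  then have "f = fps_X ^ n * fps_shift n f"
    by (intro fps_conv_fps_X_power_mult_fps_shift) (auto intro: subdegree_geI)
  then show "fps_X ^ n dvd f" by (metis dvd_triv_left)
qed

lemma ideal_in_fps_X_power_multiples:
  fixes D :: "'a::comm_ring_1 fps set"
  assumes "subring D"
  shows "ideal_in D {f \<in> D. fps_X ^ n dvd f}"
  unfolding ideal_in_def using assms by (auto intro: subring_zero subring_add subring_mult)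

lemma ideal_pow_subset_fps_X_power_multiples:
  fixes D :: "'a::comm_ring_1 fps set"
  assumes D: "subring D"
  shows "ideal_pow D {f \<in> D. f $ 0 = 0} n \<subseteq> {f \<in> D. fps_X ^ n dvd f}"
proof (induction n)
  case 0
  then show ?case by simp
next
  case (Suc n)
  have "x * y \<in> {f \<in> D. fps_X ^ Suc n dvd f}"
    if "x \<in> ideal_pow D {f \<in> D. f $ 0 = 0} n" "y \<in> D" "y $ 0 = 0" for x y
  proof -
    have "fps_X ^ n dvd x" "x \<in> D" using that(1) Suc.IH by auto
    moreover have "fps_X dvd y" using fps_X_power_dvd_iff[of 1 y] that(3) by simp
    ultimately show ?thesis
      using that(2) D mult_dvd_mono[of "fps_X ^ n" x fps_X y]
      by (simp add: subring_mult mult.commute)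
  qed
  then have "gen_ideal D {x * y | x y. x \<in> ideal_pow D {f \<in> D. f $ 0 = 0} n \<and> y \<in> {f \<in> D. f $ 0 = 0}}
      \<subseteq> {f \<in> D. fps_X ^ Suc n dvd f}"
    by (intro gen_ideal_least ideal_in_fps_X_power_multiples D) blast
  then show ?case by simp
qed

lemma fps_X_adic_Cauchy_convergent:
  fixes f :: "nat \<Rightarrow> 'a::comm_ring_1 fps"
  assumes "\<And>n. \<exists>N. \<forall>i\<ge>N. \<forall>j\<ge>N. fps_X ^ n dvd f i - f j"
  shows "\<exists>L. \<forall>n. \<exists>N. \<forall>i\<ge>N. fps_X ^ n dvd f i - L"
proof -
  obtain N where N: "\<And>n i j. i \<ge> N n \<Longrightarrow> j \<ge> N n \<Longrightarrow> fps_X ^ n dvd f i - f j"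
    using assms by metis
  define L where "L = Abs_fps (\<lambda>j. f (N (Suc j)) $ j)"
  have "fps_X ^ n dvd f i - L" if "i \<ge> (\<Sum>j<n. N (Suc j))" for n i
    unfolding fps_X_power_dvd_iff
  proof (intro allI impI)
    fix j assume "j < n"
    then have "N (Suc j) \<le> (\<Sum>j<n. N (Suc j))"
      by (intro member_le_sum) auto
    then have "fps_X ^ Suc j dvd f i - f (N (Suc j))"
      using that by (intro N) auto
    then show "(f i - L) $ j = 0"
      unfolding fps_X_power_dvd_iff L_def by simp
  qed
  then show ?thesis by blast
qed

section \<open>Subrings of \<open>K[[X]]\<close> over which \<open>K[[X]]\<close> is a root extension\<close>

lemma root_extension_if_bounded: "bounded_root_extension R S \<Longrightarrow> root_extension R S"
  unfolding root_extension_def bounded_root_extension_def by blast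

lemma fps_inverse_mem_if_root_extension:
  fixes D :: "'a::field fps set"
  assumes D: "subring D" and root: "root_extension D UNIV" and f: "f \<in> D" "f $ 0 \<noteq> 0"
  shows "inverse f \<in> D"
proof -
  obtain n where n: "n > 0" "inverse f ^ n \<in> D"
    using root unfolding root_extension_def by blast
  have "inverse f ^ n * f ^ (n - 1) = inverse f * (inverse f * f) ^ (n - 1)"
    using n(1) by (cases n) (auto simp: power_mult_distrib mult_ac)
  then have "inverse f = inverse f ^ n * f ^ (n - 1)"
    using inverse_mult_eq_1[OF f(2)] by simp
  then show ?thesis
    using n(2) f(1) by (metis D subring_mult subring_power)
qed

lemma maximal_ideal_in_root_extension_iff:
  fixes D :: "'a::field fps set"
  assumes D: "subring D" and root: "root_extension D UNIV"
  shows "maximal_ideal_in D J \<longleftrightarrow> J = {f \<in> D. f $ 0 = 0}"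
proof (rule maximal_ideal_in_iff_largest_proper)
  show "ideal_in D {f \<in> D. f $ 0 = 0}"
    unfolding ideal_in_def using D by (auto intro: subring_zero subring_add subring_mult)
  show "{f \<in> D. f $ 0 = 0} \<noteq> D"
  proof
    assume "{f \<in> D. f $ 0 = 0} = D"
    then have "1 \<in> {f \<in> D. f $ 0 = 0}" using subring_one[OF D] by simp
    then show False by simp
  qed
next
  fix J assume J: "ideal_in D J" "J \<noteq> D"
  show "J \<subseteq> {f \<in> D. f $ 0 = 0}"
  proof (intro subsetI CollectI conjI)
    fix f assume "f \<in> J"
    then show "f \<in> D" using J(1) unfolding ideal_in_def by blast
    show "f $ 0 = 0"
    proof (rule ccontr)
      assume "f $ 0 \<noteq> 0"
      then have "inverse f * f \<in> J"
        using J(1) \<open>f \<in> J\<close> \<open>f \<in> D\<close> fps_inverse_mem_if_root_extension[OF D root]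
        unfolding ideal_in_def by blast
      then have "1 \<in> J" using inverse_mult_eq_1[OF \<open>f $ 0 \<noteq> 0\<close>] by simp
      then have "D \<subseteq> J" using J(1) unfolding ideal_in_def by (metis mult_1_right subsetI)
      then show False using J unfolding ideal_in_def by blast
    qed
  qed
qed

lemma quasilocal_if_root_extension:
  fixes D :: "'a::field fps set"
  assumes "subring D" "root_extension D UNIV"
  shows "quasilocal D"
  unfolding quasilocal_def using maximal_ideal_in_root_extension_iff[OF assms] by auto

lemma AV_domain_if_root_extension:
  fixes D :: "'a::field fps set"
  assumes D: "subring D" and root: "root_extension D UNIV"
  shows "AV_domain D"
proof -
  have "\<exists>n>0. dvd_in D (a ^ n) (b ^ n)"
    if "a \<noteq> 0" "b \<noteq> 0" "subdegree a \<le> subdegree b" for a b :: "'a fps"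
  proof -
    have "a dvd b" using fps_dvd_iff[OF that(1,2)] that(3) by simp
    then obtain q where "b = a * q" by (elim dvdE)
    moreover obtain n where "n > 0" "q ^ n \<in> D"
      using root unfolding root_extension_def by blast
    ultimately show ?thesis
      unfolding dvd_in_def by (auto simp: power_mult_distrib)
  qed
  then show ?thesis
    unfolding AV_domain_def using D by (metis DiffE insertCI nat_le_linear)
qed

lemma API_domain_if_bounded_root_extension:
  fixes D :: "'a::field fps set"
  assumes D: "subring D" and bounded: "bounded_root_extension D UNIV"
  shows "API_domain D"
  unfolding API_domain_def
proof (intro conjI allI impI D)
  fix S assume S: "S \<noteq> {} \<and> S \<subseteq> D - {0}"
  obtain n where n: "n > 0" "\<And>g. g ^ n \<in> D"
    using bounded unfolding bounded_root_extension_def by blast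
  obtain s0 where s0: "s0 \<in> S" and least: "\<And>s. s \<in> S \<Longrightarrow> subdegree s0 \<le> subdegree s"
    using ex_has_least_nat[of "\<lambda>s. s \<in> S" _ subdegree] S by blast
  have "dvd_in D (s0 ^ n) (s ^ n)" if s: "s \<in> S" for s
  proof -
    have "s0 dvd s" using fps_dvd_iff[of s0 s] least[OF s] s0 s S by auto
    then obtain q where "s = s0 * q" by (elim dvdE)
    then show ?thesis
      unfolding dvd_in_def using n(2)[of q] by (auto simp: power_mult_distrib)
  qed
  moreover have "(\<lambda>d. d ^ n) ` S \<subseteq> D"
    using S subring_power[OF D] by blast
  ultimately have "principal_in D (gen_ideal D ((\<lambda>d. d ^ n) ` S))"
    using s0 by (intro principal_in_gen_ideal[OF D, of _ "s0 ^ n"]) auto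
  then show "\<exists>n>0. principal_in D (gen_ideal D ((\<lambda>d. d ^ n) ` S))"
    using n(1) by blast
qed

text \<open>\<open>K[[X]]\<close> is integrally closed: if \<open>x\<close> has negative order, the coefficient of
  \<open>x\<^sup>n + \<Sum>c\<^sub>i x\<^sup>i\<close> at \<open>n \<cdot> ord x\<close> comes from \<open>x\<^sup>n\<close> alone.\<close>
lemma integral_over_fls_in_range_fps_to_fls:
  fixes x :: "'a::field fls"
  assumes "integral_over_fls D x"
  shows "x \<in> range fps_to_fls"
proof (cases "fls_subdegree x \<ge> 0")
  case True
  then have "x = fps_to_fls (fls_regpart x)" by simp
  then show ?thesis by blast
next
  case False
  let ?s = "fls_subdegree x"
  obtain n c where eq: "x ^ n + (\<Sum>i<n. fps_to_fls (c i) * x ^ i) = 0"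
    using assms unfolding integral_over_fls_def by blast
  have "(fps_to_fls (c i) * x ^ i) $$ (int n * ?s) = 0" if "i < n" for i
  proof (rule fls_times_nth_eq0)
    have "int n * ?s < int i * ?s"
      using that False by (intro mult_strict_right_mono_neg) auto
    then show "int n * ?s < fls_subdegree (fps_to_fls (c i)) + fls_subdegree (x ^ i)"
      using fls_subdegree_fls_to_fps_gt0[of "c i"] by (simp add: fls_subdegree_pow)
  qed
  then have "(\<Sum>i<n. fps_to_fls (c i) * x ^ i) $$ (int n * ?s) = 0"
    by (simp add: fls_nth_sum)
  moreover have "x \<noteq> 0" using False by auto
  then have "(x ^ n) $$ (int n * ?s) \<noteq> 0" by simp
  ultimately show ?thesis
    using arg_cong[OF eq, of "\<lambda>y. y $$ (int n * ?s)"] by simp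
qed

lemma integral_closure_fls_eq_range:
  fixes D :: "'a::field fps set"
  assumes D: "subring D" and root: "root_extension D UNIV"
    and conductor: "\<And>g. fps_X ^ m * g \<in> D"
  shows "integral_closure_fls D = range fps_to_fls"
proof (intro equalityI subsetI)
  fix x assume "x \<in> integral_closure_fls D"
  then show "x \<in> range fps_to_fls"
    unfolding integral_closure_fls_def by (blast intro: integral_over_fls_in_range_fps_to_fls)
next
  fix x :: "'a fls" assume "x \<in> range fps_to_fls"
  then obtain g where g: "x = fps_to_fls g" by blast
  have "x = fps_to_fls (fps_X ^ m * g) / fps_to_fls (fps_X ^ m)"
    by (simp add: g fls_times_fps_to_fls)
  then have "x \<in> quot_field_fls D"
    unfolding quot_field_fls_def using conductor[of g] conductor[of 1] by force
  moreover obtain n where n: "n > 0" "g ^ n \<in> D"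
    using root unfolding root_extension_def by blast
  have "integral_over_fls D x"
    unfolding integral_over_fls_def
  proof (intro exI conjI allI impI)
    let ?c = "\<lambda>i::nat. if i = 0 then - (g ^ n) else 0"
    show "?c i \<in> D" for i
      using n(2) D by (simp add: subring_zero subring_uminus)
    have "(\<Sum>i<n. fps_to_fls (?c i) * x ^ i) = (\<Sum>i<n. if i = 0 then - (x ^ n) else 0)"
      by (intro sum.cong) (auto simp: g fps_to_fls_power)
    then show "x ^ n + (\<Sum>i<n. fps_to_fls (?c i) * x ^ i) = 0"
      using n(1) by simp
  qed
  ultimately show "x \<in> integral_closure_fls D"
    unfolding integral_closure_fls_def by blast
qed

section \<open>Rings between \<open>k + X\<^sup>m K[[X]]\<close> and \<open>K[[X]]\<close>\<close>

lemma subring_fps_const_image: "subfield k \<Longrightarrow> subring (fps_const ` k)"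
  unfolding subring_def using subfield_subring[of k]
  by (auto simp: image_iff subring_zero subring_one subring_add subring_diff subring_mult
      simp flip: fps_const_add fps_const_sub fps_const_mult)

lemma fps_const_image_inverse:
  assumes "subfield k" "c \<in> fps_const ` k" "c \<noteq> 0"
  shows "\<exists>c'\<in>fps_const ` k. c' * c = 1"
proof -
  obtain a where "a \<in> k" "c = fps_const a" "a \<noteq> 0" using assms(2,3) by auto
  then show ?thesis
    using subfield_inverse[OF assms(1)]
    by (intro bexI[of _ "fps_const (inverse a)"]) (auto simp flip: fps_const_mult)
qed

text \<open>The spanning family is \<open>b X\<^sup>j\<close> with \<open>j < T\<close> and \<open>b\<close> in a finite spanning set of \<open>K\<close> over \<open>k\<close>.\<close>
lemma range_fps_cutoff_subset_finite_span:
  fixes k :: "'a::field set"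
  assumes "finite_degree k"
  shows "\<exists>J :: (nat \<times> 'a) set. \<exists>g. finite J \<and> range (fps_cutoff T) \<subseteq> span_over (fps_const ` k) g J"
proof -
  obtain B :: "'a set" where B: "finite B"
    and "\<forall>x. \<exists>c. (\<forall>b\<in>B. c b \<in> k) \<and> x = (\<Sum>b\<in>B. c b * b)"
    using assms unfolding finite_degree_def by (elim exE conjE) blast
  then obtain cf where cf: "\<And>x. (\<forall>b\<in>B. cf x b \<in> k) \<and> x = (\<Sum>b\<in>B. cf x b * b)"
    by metis
  let ?J = "{..<T} \<times> B" and ?g = "\<lambda>(j, b). fps_const b * fps_X ^ j"
  have "fps_cutoff T f \<in> span_over (fps_const ` k) ?g ?J" for f
  proof -
    let ?c = "\<lambda>(j, b). fps_const (cf (f $ j) b)"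
    have "fps_cutoff T f = (\<Sum>p\<in>?J. ?c p * ?g p)"
    proof (rule fps_ext)
      fix n
      have "(\<Sum>p\<in>?J. ?c p * ?g p) $ n = (\<Sum>(j, b)\<in>?J. cf (f $ j) b * b * (if n = j then 1 else 0))"
        unfolding fps_sum_nth
        by (intro sum.cong refl) (auto simp: fps_X_power_nth split: prod.splits)
      also have "\<dots> = (\<Sum>j<T. \<Sum>b\<in>B. cf (f $ j) b * b * (if n = j then 1 else 0))"
        by (rule sum.cartesian_product[symmetric])
      also have "\<dots> = (\<Sum>j<T. if n = j then (\<Sum>b\<in>B. cf (f $ j) b * b) else 0)"
        by (intro sum.cong refl) auto
      also have "\<dots> = fps_cutoff T f $ n"
        using cf[of "f $ n"] by (simp add: sum.delta)
      finally show "fps_cutoff T f $ n = (\<Sum>p\<in>?J. ?c p * ?g p) $ n" by simp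
    qed
    moreover have "\<forall>p\<in>?J. ?c p \<in> fps_const ` k" using cf by auto
    ultimately show ?thesis unfolding span_over_def by blast
  qed
  then show ?thesis using B by (intro exI[of _ ?J] exI[of _ ?g]) auto
qed

locale fps_intermediate_ring =
  fixes k :: "'a::field set" and D :: "'a fps set" and m :: nat
  assumes subfield: "subfield k" and subring: "subring D"
    and lower: "{fps_const c + fps_X ^ m * f | c f. c \<in> k} \<subseteq> D"
begin

lemma fps_const_mem: "c \<in> k \<Longrightarrow> fps_const c \<in> D"
  using lower by force

lemma fps_X_power_mult_mem: "fps_X ^ m * f \<in> D"
  using lower subring_zero[OF subfield_subring[OF subfield]] by force

lemma mem_if_fps_X_power_dvd: "fps_X ^ m dvd f \<Longrightarrow> f \<in> D"
  using fps_X_power_mult_mem by (auto elim: dvdE)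

lemma subfield_subset_residues: "k \<subseteq> (\<lambda>f. f $ 0) ` D"
  using fps_const_mem by (auto intro: image_eqI[of _ _ "fps_const _"])

lemma power_char_power_mem:
  assumes char: "CHAR('a) > 0" and g0: "g $ 0 \<in> k"
  shows "g ^ (CHAR('a) ^ m) \<in> D"
proof -
  let ?q = "CHAR('a) ^ m"
  have "m \<le> ?q"
  proof -
    have "2 \<le> CHAR('a)" using prime_ge_2_nat[OF prime_CHAR_semidom[OF char]] .
    then have "2 ^ m \<le> ?q" by (intro power_mono) auto
    with less_exp[of m] show ?thesis by linarith
  qed
  have "g = fps_const (g $ 0) + fps_X * fps_shift 1 g"
    by (rule fps_ext) (auto simp: fps_X_mult_nth)
  then have "g ^ ?q = fps_const (g $ 0) ^ ?q + (fps_X * fps_shift 1 g) ^ ?q"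
    using freshmans_dream'[of ?q m "fps_const (g $ 0)" "fps_X * fps_shift 1 g"]
      prime_CHAR_semidom[OF char] by simp
  also have "\<dots> = fps_const ((g $ 0) ^ ?q) + fps_X ^ m * (fps_X ^ (?q - m) * fps_shift 1 g ^ ?q)"
    using \<open>m \<le> ?q\<close> by (simp add: power_mult_distrib mult.assoc flip: power_add)
  also have "\<dots> \<in> D"
    using lower g0 subring_power[OF subfield_subring[OF subfield]] by blast
  finally show ?thesis .
qed

lemma root_extension_if_root_extension_subfield:
  assumes char: "CHAR('a) > 0" and root: "root_extension k UNIV"
  shows "root_extension D UNIV"
  unfolding root_extension_def
proof (intro conjI ballI subset_UNIV)
  fix g :: "'a fps"
  obtain n where n: "n > 0" "(g $ 0) ^ n \<in> k"
    using root unfolding root_extension_def by blast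
  then have "(g ^ n) ^ (CHAR('a) ^ m) \<in> D"
    by (intro power_char_power_mem char) (simp add: fps_nth_power_0)
  then show "\<exists>n>0. g ^ n \<in> D"
    using n(1) char by (intro exI[of _ "n * CHAR('a) ^ m"]) (simp add: power_mult)
qed

text \<open>Dividing \<open>g\<^sup>N\<close> by a unit of \<open>D\<close> with constant term \<open>g(0)\<^sup>N\<close> moves the constant term into \<open>k\<close>.\<close>
lemma bounded_root_extension_if_bounded_residues:
  assumes char: "CHAR('a) > 0" and root: "root_extension D UNIV"
    and bounded: "bounded_root_extension ((\<lambda>f. f $ 0) ` D) UNIV"
  shows "bounded_root_extension D UNIV"
proof -
  obtain N where N: "N > 0" "\<And>a. a ^ N \<in> (\<lambda>f. f $ 0) ` D"
    using bounded unfolding bounded_root_extension_def by blast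
  let ?q = "CHAR('a) ^ m"
  have "g ^ (N * ?q) \<in> D" for g
  proof -
    obtain u where u: "u \<in> D" "u $ 0 \<noteq> 0" "(g ^ N * inverse u) $ 0 \<in> k"
    proof (cases "(g $ 0) ^ N = 0")
      case True
      then show ?thesis
        using that[of 1] subring_one[OF subring] subring_zero[OF subfield_subring[OF subfield]]
        by (simp add: fps_nth_power_0 zero_power)
    next
      case False
      obtain f where "f \<in> D" "f $ 0 = (g $ 0) ^ N" using N(2) by (metis imageE)
      then show ?thesis
        using that[of f] False subring_one[OF subfield_subring[OF subfield]]
        by (simp add: fps_nth_power_0)
    qed
    have "(g ^ N * inverse u) ^ ?q * u ^ ?q \<in> D"
      using power_char_power_mem[OF char u(3)] subring_power[OF subring u(1)]
      by (rule subring_mult[OF subring])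
    also have "(g ^ N * inverse u) ^ ?q * u ^ ?q = (g ^ N * (inverse u * u)) ^ ?q"
      by (simp only: power_mult_distrib mult.assoc)
    also have "\<dots> = g ^ (N * ?q)"
      using inverse_mult_eq_1[OF u(2)] by (simp add: power_mult)
    finally show ?thesis .
  qed
  then show ?thesis
    unfolding bounded_root_extension_def using N(1) char by (intro conjI exI[of _ "N * ?q"]) auto
qed

lemma bounded_root_extension_if_bounded_root_extension_subfield:
  assumes char: "CHAR('a) > 0" and bounded: "bounded_root_extension k UNIV"
  shows "bounded_root_extension D UNIV"
proof (rule bounded_root_extension_if_bounded_residues[OF char])
  show "root_extension D UNIV"
    by (rule root_extension_if_root_extension_subfield[OF char root_extension_if_bounded[OF bounded]])
  show "bounded_root_extension ((\<lambda>f. f $ 0) ` D) UNIV"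
    using bounded subfield_subset_residues unfolding bounded_root_extension_def by blast
qed

text \<open>A generator of the ideal generated by the \<open>(a X\<^sup>m)\<^sup>n\<close> has order \<open>m n\<close>, so it is
  \<open>X\<^sup>m\<^sup>n h\<close>, and cancelling \<open>X\<^sup>m\<^sup>n\<close> makes every \<open>a\<^sup>n\<close> a \<open>D\<close>-multiple of \<open>h\<close>.\<close>
lemma principal_gen_ideal_powers_factor:
  assumes "principal_in D (gen_ideal D ((\<lambda>d. d ^ n) ` {fps_const a * fps_X ^ m | a::'a. a \<noteq> 0}))"
  shows "\<exists>h. \<forall>a. a \<noteq> 0 \<longrightarrow> (\<exists>c\<in>D. fps_const (a ^ n) = h * c)"
proof -
  let ?S = "{fps_const a * fps_X ^ m | a::'a. a \<noteq> 0}"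
  obtain g where gen: "gen_ideal D ((\<lambda>d. d ^ n) ` ?S) = {g * c | c. c \<in> D}"
    using assms unfolding principal_in_def by blast
  have pow: "(fps_const a * fps_X ^ m) ^ n = fps_X ^ (m * n) * fps_const (a ^ n)" for a :: 'a
    by (simp add: power_mult_distrib power_mult mult.commute)
  have "gen_ideal D ((\<lambda>d. d ^ n) ` ?S) \<subseteq> {f \<in> D. fps_X ^ (m * n) dvd f}"
  proof (intro gen_ideal_least ideal_in_fps_X_power_multiples subring image_subsetI)
    fix s assume "s \<in> ?S"
    then obtain a where a: "s = fps_const a * fps_X ^ m" by blast
    have "fps_X ^ (m * n) dvd s ^ n"
      unfolding a pow by (rule dvd_triv_left)
    moreover have "s \<in> D"
      unfolding a using fps_X_power_mult_mem[of "fps_const a"] by (simp add: mult.commute)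
    ultimately show "s ^ n \<in> {f \<in> D. fps_X ^ (m * n) dvd f}"
      using subring_power[OF subring] by blast
  qed
  moreover have "g \<in> gen_ideal D ((\<lambda>d. d ^ n) ` ?S)"
    unfolding gen using subring_one[OF subring] by force
  ultimately obtain h where h: "g = fps_X ^ (m * n) * h" by (auto elim: dvdE)
  have "\<exists>c\<in>D. fps_const (a ^ n) = h * c" if "a \<noteq> 0" for a
  proof -
    have "fps_const a * fps_X ^ m \<in> ?S" using that by blast
    then have "(fps_const a * fps_X ^ m) ^ n \<in> gen_ideal D ((\<lambda>d. d ^ n) ` ?S)"
      using gen_ideal_superset[of "(\<lambda>d. d ^ n) ` ?S" D] by blast
    then obtain c where "c \<in> D" "fps_X ^ (m * n) * fps_const (a ^ n) = fps_X ^ (m * n) * h * c"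
      unfolding gen pow h by blast
    then show ?thesis by (auto simp: mult.assoc)
  qed
  then show ?thesis by blast
qed

lemma bounded_residues_if_API_domain:
  assumes root: "root_extension D UNIV" and API: "API_domain D"
  shows "bounded_root_extension ((\<lambda>f. f $ 0) ` D) UNIV"
proof -
  let ?S = "{fps_const a * fps_X ^ m | a::'a. a \<noteq> 0}"
  have "fps_const 1 * fps_X ^ m \<in> ?S" by (intro CollectI exI[of _ 1]) simp
  moreover have "?S \<subseteq> D - {0}"
    using fps_X_power_mult_mem by (auto simp: mult.commute)
  ultimately have S: "?S \<noteq> {} \<and> ?S \<subseteq> D - {0}" by blast
  have "?S \<noteq> {} \<and> ?S \<subseteq> D - {0} \<longrightarrow> (\<exists>n>0. principal_in D (gen_ideal D ((\<lambda>d. d ^ n) ` ?S)))"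
    using API unfolding API_domain_def by (elim conjE allE[of _ ?S]) assumption
  then obtain n where n: "n > 0" and principal: "principal_in D (gen_ideal D ((\<lambda>d. d ^ n) ` ?S))"
    using S by blast
  have "\<exists>h. \<forall>a. a \<noteq> 0 \<longrightarrow> (\<exists>c\<in>D. fps_const (a ^ n) = h * c)"
    by (rule principal_gen_ideal_powers_factor[OF principal])
  then obtain h where factor: "\<And>a. a \<noteq> 0 \<Longrightarrow> \<exists>c\<in>D. fps_const (a ^ n) = h * c"
    by blast
  obtain c1 where c1: "c1 \<in> D" "1 = h * c1" using factor[of 1] by auto
  then have "c1 $ 0 \<noteq> 0" by (metis fps_mult_nth_0 fps_one_nth mult_zero_right zero_neq_one)
  have "h = inverse c1"
    using c1(2) inverse_mult_eq_1'[OF \<open>c1 $ 0 \<noteq> 0\<close>] by (metis mult.assoc mult_1_left mult_1_right)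
  then have "h \<in> D"
    using fps_inverse_mem_if_root_extension[OF subring root c1(1) \<open>c1 $ 0 \<noteq> 0\<close>] by simp
  have "a ^ n \<in> (\<lambda>f. f $ 0) ` D" for a
  proof (cases "a = 0")
    case True
    then show ?thesis using n subring_zero[OF subring] by (auto intro: image_eqI[of _ _ 0])
  next
    case False
    then obtain c where "c \<in> D" "fps_const (a ^ n) = h * c" using factor by blast
    then have "fps_const (a ^ n) \<in> D" using \<open>h \<in> D\<close> subring_mult[OF subring] by metis
    then show ?thesis by (auto intro: image_eqI[of _ _ "fps_const (a ^ n)"])
  qed
  then show ?thesis
    unfolding bounded_root_extension_def using n by blast
qed

lemma API_domain_iff_bounded_residues:
  assumes "CHAR('a) > 0" "root_extension D UNIV"
  shows "API_domain D \<longleftrightarrow> bounded_root_extension ((\<lambda>f. f $ 0) ` D) UNIV"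
  using bounded_residues_if_API_domain[OF assms(2)]
    API_domain_if_bounded_root_extension[OF subring bounded_root_extension_if_bounded_residues[OF assms]]
  by blast

lemma ideal_in_mem_if_high_order:
  assumes I: "ideal_in D I" and f: "f \<in> I" "f \<noteq> 0"
    and h: "fps_X ^ (subdegree f + m) dvd h"
  shows "h \<in> I"
proof (cases "h = 0")
  case True
  then show ?thesis using I unfolding ideal_in_def by simp
next
  case False
  then have "subdegree f + m \<le> subdegree h"
    using h fps_dvd_iff[of "fps_X ^ (subdegree f + m)" h] by simp
  then have "f dvd h" using fps_dvd_iff[OF f(2) False] by simp
  then obtain q where q: "h = f * q" by (elim dvdE)
  with False f(2) have "subdegree h = subdegree f + subdegree q" by auto
  with \<open>subdegree f + m \<le> subdegree h\<close> q False have "fps_X ^ m dvd q"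
    using fps_dvd_iff[of "fps_X ^ m" q] by simp
  then have "q * f \<in> I"
    using I f(1) mem_if_fps_X_power_dvd unfolding ideal_in_def by blast
  then show ?thesis using q by (simp add: mult.commute)
qed

lemma subspace_over_fps_cutoff_image:
  assumes "ideal_in D I"
  shows "subspace_over (fps_const ` k) (fps_cutoff T ` I)"
  unfolding subspace_over_def
proof (intro conjI ballI)
  show "0 \<in> fps_cutoff T ` I"
    using assms unfolding ideal_in_def by (auto intro: image_eqI[of _ _ 0])
  show "x + y \<in> fps_cutoff T ` I" if "x \<in> fps_cutoff T ` I" "y \<in> fps_cutoff T ` I" for x y
    using that assms unfolding ideal_in_def by (auto simp flip: fps_cutoff_add)
  show "c * x \<in> fps_cutoff T ` I" if cx: "c \<in> fps_const ` k" "x \<in> fps_cutoff T ` I" for c x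
  proof -
    obtain a f where "a \<in> k" "c = fps_const a" "f \<in> I" "x = fps_cutoff T f" using cx by blast
    moreover have "fps_cutoff T (fps_const a * f) = fps_const a * fps_cutoff T f"
      by (simp add: fps_eq_iff)
    ultimately show ?thesis
      using assms fps_const_mem unfolding ideal_in_def by (metis image_eqI)
  qed
qed

text \<open>After subtracting the \<open>F\<close>-combination of the \<open>g a\<close>, the remainder is divisible by
  \<open>X\<^sup>N\<^sup>+\<^sup>m\<close>, hence a \<open>D\<close>-multiple of \<open>X\<^sup>N\<close>.\<close>
lemma ideal_eq_gen_ideal_if_truncations_span:
  assumes I: "ideal_in D I" and XN: "fps_X ^ N \<in> I" and gens: "g ` A \<subseteq> I" and F: "F \<subseteq> D"
    and span: "\<And>f. f \<in> I \<Longrightarrow> fps_cutoff (N + m) f \<in> span_over F (\<lambda>a. fps_cutoff (N + m) (g a)) A"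
  shows "I = gen_ideal D (insert (fps_X ^ N) (g ` A))"
proof
  let ?G = "gen_ideal D (insert (fps_X ^ N) (g ` A))"
  have GI: "ideal_in D ?G"
    using I XN gens by (intro gen_ideal_ideal subring) (auto simp: ideal_in_def)
  show "?G \<subseteq> I" using I XN gens by (intro gen_ideal_least) auto
  show "I \<subseteq> ?G"
  proof
    fix f assume "f \<in> I"
    then obtain e where e: "\<forall>a\<in>A. e a \<in> F"
      and cut: "fps_cutoff (N + m) f = (\<Sum>a\<in>A. e a * fps_cutoff (N + m) (g a))"
      using span unfolding span_over_def by blast
    define s where "s = (\<Sum>a\<in>A. e a * g a)"
    have "e a * g a \<in> ?G" if "a \<in> A" for a
    proof -
      have "g a \<in> ?G" using that gen_ideal_superset[of "insert (fps_X ^ N) (g ` A)" D] by blast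
      moreover have "e a \<in> D" using that e F by blast
      ultimately show ?thesis using GI unfolding ideal_in_def by blast
    qed
    then have "s \<in> ?G"
      unfolding s_def by (rule ideal_in_sum[OF GI])
    have "(f - s) $ j = 0" if "j < N + m" for j
    proof -
      have "f $ j = fps_cutoff (N + m) f $ j" using that by simp
      also have "\<dots> = (\<Sum>a\<in>A. (e a * g a) $ j)"
        unfolding cut fps_sum_nth using that by (simp add: fps_cutoff_right_mult_nth)
      finally show ?thesis by (simp add: s_def fps_sum_nth)
    qed
    then obtain w where "f - s = fps_X ^ N * (fps_X ^ m * w)"
      using fps_X_power_dvd_iff[of "N + m" "f - s"] by (auto simp: power_add mult.assoc elim: dvdE)
    moreover have "(fps_X ^ m * w) * fps_X ^ N \<in> ?G"
      using GI fps_X_power_mult_mem gen_ideal_superset[of "insert (fps_X ^ N) (g ` A)" D]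
      unfolding ideal_in_def by blast
    ultimately have "f - s \<in> ?G" by (simp add: mult.commute)
    then show "f \<in> ?G"
      using \<open>s \<in> ?G\<close> GI unfolding ideal_in_def by (metis diff_add_cancel)
  qed
qed

lemma fps_cutoff_ideal_finitely_spanned:
  assumes "finite_degree k" and I: "ideal_in D I"
  shows "\<exists>(A :: 'a fps set) lift. finite A \<and> lift ` A \<subseteq> I \<and>
    (\<forall>f\<in>I. fps_cutoff T f \<in> span_over (fps_const ` k) (\<lambda>a. fps_cutoff T (lift a)) A)"
proof -
  have "\<exists>J :: (nat \<times> 'a) set. \<exists>g. finite J \<and> range (fps_cutoff T) \<subseteq> span_over (fps_const ` k) g J"
    by (rule range_fps_cutoff_subset_finite_span[OF assms(1)])
  then obtain J :: "(nat \<times> 'a) set" and g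
    where J: "finite J" "range (fps_cutoff T) \<subseteq> span_over (fps_const ` k) g J"
    by blast
  have "\<exists>A. finite A \<and> A \<subseteq> fps_cutoff T ` I \<and> fps_cutoff T ` I \<subseteq> span_over (fps_const ` k) id A"
    using J(2) by (intro finitely_generated_subspace_over[OF subring_fps_const_image[OF subfield]
        fps_const_image_inverse[OF subfield] J(1) subspace_over_fps_cutoff_image[OF I]]) auto
  then obtain A where A: "finite A" "A \<subseteq> fps_cutoff T ` I"
    "fps_cutoff T ` I \<subseteq> span_over (fps_const ` k) id A"
    by blast
  have "\<forall>a\<in>A. \<exists>f. f \<in> I \<and> fps_cutoff T f = a" using A(2) by blast
  then obtain lift where lift: "\<And>a. a \<in> A \<Longrightarrow> lift a \<in> I \<and> fps_cutoff T (lift a) = a"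
    by metis
  have "span_over (fps_const ` k) (\<lambda>a. fps_cutoff T (lift a)) A = span_over (fps_const ` k) id A"
    unfolding span_over_def using lift by (auto intro!: sum.cong)
  then have "\<forall>f\<in>I. fps_cutoff T f \<in> span_over (fps_const ` k) (\<lambda>a. fps_cutoff T (lift a)) A"
    using A(3) by (simp add: image_subset_iff)
  moreover have "lift ` A \<subseteq> I" using lift by blast
  ultimately show ?thesis using A(1) by (intro exI[of _ A] exI[of _ lift] conjI)
qed

lemma noetherian_if_finite_degree:
  assumes "finite_degree k"
  shows "noetherian_in D"
  unfolding noetherian_in_def
proof (intro allI impI)
  fix I assume I: "ideal_in D I"
  show "\<exists>A. finite A \<and> A \<subseteq> I \<and> I = gen_ideal D A"
  proof (cases "I \<subseteq> {0}")
    case True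
    have "gen_ideal D {} \<subseteq> I" by (rule gen_ideal_least[OF I]) simp
    moreover have "0 \<in> gen_ideal D {}"
      using gen_ideal_ideal[OF subring, of "{}"] unfolding ideal_in_def by simp
    ultimately have "I = gen_ideal D {}" using True by auto
    then show ?thesis by blast
  next
    case False
    then obtain f0 where f0: "f0 \<in> I" "f0 \<noteq> 0" by auto
    define N where "N = subdegree f0 + m"
    have XN: "fps_X ^ N \<in> I"
      unfolding N_def by (rule ideal_in_mem_if_high_order[OF I f0]) simp
    obtain A :: "'a fps set" and lift where A: "finite A" "lift ` A \<subseteq> I"
      and span: "\<forall>f\<in>I. fps_cutoff (N + m) f
        \<in> span_over (fps_const ` k) (\<lambda>a. fps_cutoff (N + m) (lift a)) A"
      using fps_cutoff_ideal_finitely_spanned[OF assms I, where T = "N + m"] by blast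
    have "fps_const ` k \<subseteq> D" using fps_const_mem by blast
    then have "I = gen_ideal D (insert (fps_X ^ N) (lift ` A))"
      using span by (intro ideal_eq_gen_ideal_if_truncations_span[OF I XN A(2)]) auto
    moreover have "insert (fps_X ^ N) (lift ` A) \<subseteq> I" using XN A(2) by blast
    moreover have "finite (insert (fps_X ^ N) (lift ` A))" using A(1) by simp
    ultimately show ?thesis by blast
  qed
qed

lemma fps_X_power_dvd_imp_mem_ideal_pow:
  "fps_X ^ (Suc m * Suc n) dvd f \<Longrightarrow> f \<in> ideal_pow D {f \<in> D. f $ 0 = 0} n"
proof (induction n arbitrary: f)
  case 0
  have "fps_X ^ m dvd fps_X ^ (Suc m * Suc 0)" by (rule le_imp_power_dvd) simp
  then show ?case using dvd_trans[OF _ 0] by (simp add: mem_if_fps_X_power_dvd)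
next
  case (Suc n)
  then obtain g where "f = (fps_X ^ (Suc m * Suc n) * g) * fps_X ^ Suc m"
    by (auto simp: mult_ac power_add elim!: dvdE)
  moreover have "fps_X ^ (Suc m * Suc n) * g \<in> ideal_pow D {f \<in> D. f $ 0 = 0} n"
    by (rule Suc.IH) simp
  moreover have "fps_X ^ Suc m \<in> {f \<in> D. f $ 0 = 0}"
    using mem_if_fps_X_power_dvd[of "fps_X ^ Suc m"] by (simp add: le_imp_power_dvd)
  ultimately show ?case
    using gen_ideal_superset by fastforce
qed

lemma adic_complete: "adic_complete D {f \<in> D. f $ 0 = 0}"
  unfolding adic_complete_def
proof (intro conjI allI impI)
  let ?P = "ideal_pow D {f \<in> D. f $ 0 = 0}"
  have P: "f \<in> ?P n \<Longrightarrow> f \<in> D \<and> fps_X ^ n dvd f" for f n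
    using ideal_pow_subset_fps_X_power_multiples[OF subring] by blast
  show "(\<Inter>n. ?P n) = {0}"
  proof
    have "0 \<in> ?P n" for n
      using ideal_pow_ideal[OF subring Collect_subset[of D "\<lambda>f. f $ 0 = 0"]]
      by (simp add: ideal_in_def)
    then show "{0} \<subseteq> (\<Inter>n. ?P n)" by blast
    show "(\<Inter>n. ?P n) \<subseteq> {0}"
    proof
      fix f assume "f \<in> (\<Inter>n. ?P n)"
      then have "fps_X ^ Suc j dvd f" for j using P by blast
      then have "f $ j = 0" for j using fps_X_power_dvd_iff[of "Suc j" f] by blast
      then show "f \<in> {0}" by (simp add: fps_ext)
    qed
  qed
next
  let ?P = "ideal_pow D {f \<in> D. f $ 0 = 0}"
  fix f :: "nat \<Rightarrow> 'a fps"
  assume f: "(\<forall>i. f i \<in> D) \<and> (\<forall>n. \<exists>N. \<forall>i\<ge>N. \<forall>j\<ge>N. f i - f j \<in> ?P n)"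
  have "\<exists>N. \<forall>i\<ge>N. \<forall>j\<ge>N. fps_X ^ n dvd f i - f j" for n
    using f ideal_pow_subset_fps_X_power_multiples[OF subring] by blast
  then obtain L where L: "\<And>n. \<exists>N. \<forall>i\<ge>N. fps_X ^ n dvd f i - L"
    using fps_X_adic_Cauchy_convergent by blast
  obtain N where "fps_X ^ m dvd f N - L" using L[of m] by blast
  then have "L \<in> D"
    using f mem_if_fps_X_power_dvd subring_diff[OF subring, of "f N" "f N - L"] by auto
  moreover have "\<exists>N. \<forall>i\<ge>N. f i - L \<in> ?P n" for n
    using L[of "Suc m * Suc n"] fps_X_power_dvd_imp_mem_ideal_pow by blast
  ultimately show "\<exists>L\<in>D. \<forall>n. \<exists>N. \<forall>i\<ge>N. f i - L \<in> ?P n" by blast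
qed

lemma complete_local_if_finite_degree:
  assumes "finite_degree k" "root_extension D UNIV"
  shows "complete_local D"
  unfolding complete_local_def
  using noetherian_if_finite_degree[OF assms(1)] quasilocal_if_root_extension[OF subring assms(2)]
    adic_complete
  by (simp add: maximal_ideal_in_root_extension_iff[OF subring assms(2)])

end

theorem theorem7:
  fixes k :: "'a::field set" and p m :: nat and D :: "'a fps set"
  assumes k: "subfield k"
    and p: "CHAR('a) = p" "p > 0"
    and D: "subring D"
    and lower: "{fps_const c + fps_X ^ m * f | c f. c \<in> k} \<subseteq> D"
  defines "M \<equiv> {f \<in> D. fps_nth f 0 = 0}"
    and "k0 \<equiv> (\<lambda>f. fps_nth f 0) ` D"
  shows
    "(root_extension k UNIV \<longrightarrow>
        quasilocal D \<and> AV_domain D \<and> integral_closure_fls D = range fps_to_fls)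
   \<and> (bounded_root_extension k UNIV \<longrightarrow>
        quasilocal D \<and> API_domain D \<and> integral_closure_fls D = range fps_to_fls)
   \<and> (root_extension k UNIV \<longrightarrow> (API_domain D \<longleftrightarrow> bounded_root_extension k0 UNIV))
   \<and> (finite_degree k \<longrightarrow>
        (root_extension k UNIV \<longrightarrow> complete_local D \<and> AV_domain D)
      \<and> (bounded_root_extension k UNIV \<longrightarrow> complete_local D \<and> API_domain D))"
proof -
  interpret fps_intermediate_ring k D m
    using k D lower by unfold_locales
  have char: "CHAR('a) > 0" using p by simp
  have root: "root_extension D UNIV" if "root_extension k UNIV"
    using root_extension_if_root_extension_subfield[OF char that] .
  have bounded: "bounded_root_extension D UNIV" if "bounded_root_extension k UNIV"
    using bounded_root_extension_if_bounded_root_extension_subfield[OF char that] .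
  show ?thesis
    unfolding k0_def
    using quasilocal_if_root_extension[OF D root] AV_domain_if_root_extension[OF D root]
      integral_closure_fls_eq_range[OF D root fps_X_power_mult_mem]
      API_domain_if_bounded_root_extension[OF D bounded] root_extension_if_bounded
      API_domain_iff_bounded_residues[OF char root] complete_local_if_finite_degree[OF _ root]
    by blast
qed

end
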